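(* Let $\theta>0$ and $n\ge 3$. Let $\eta=(\eta_n,\ldots,\eta_1)$ be the random vector whose law is that of $(\xi_n,\ldots,\xi_1)$ conditioned on the event $\{(\xi_n,\ldots,\xi_1)\in\Delta_n\}$, and set $\eta_{n+1}=1$. Then: (i) The sequence $\eta_{n+1}=1,\eta_n,\eta_{n-1},\ldots,\eta_2,\eta_1$ (in this order) is a non-homogeneous Markov chain on $\{0,1\}$. Its transitions are as follows. $\eta_n=0$ almost surely. For $r=3,\ldots,n-1$, $$\mathbb{P}(\eta_r=0\mid \eta_{r+1}=0)=\frac{(\theta+r-1)\lambda_r(\theta)}{(\theta+r-1)\lambda_r(\theta)+\theta\lambda_{r-1}(\theta)},\qquad \mathbb{P}(\eta_r=1\mid \eta_{r+1}=0)=\frac{\theta\lambda_{r-1}(\theta)}{(\theta+r-1)\lambda_r(\theta)+\theta\lambda_{r-1}(\theta)},$$ $$\mathbb{P}(\eta_r=0\mid \eta_{r+1}=1)=1,\qquad \mathbb{P}(\eta_r=1\mid \eta_{r+1}=1)=0.$$ Moreover $\eta_2=0$ almost surely and $\eta_1=1$ almost surely. (ii) For $j=2,\ldots,n$, let $\tilde C_j(n)$ be the number of $j$-spacings in the sequence $1\,\eta_n\,\eta_{n-1}\cdots\eta_2\,\eta_1$. Then $(\tilde C_2(n),\ldots,\tilde C_n(n))$ has the law of $(C_2(n),\ldots,C_n(n))$ conditioned on $C_1(n)=0$, where $(C_1(n),\ldots,C_n(n))\sim \mathrm{ESF}(\theta)$.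
   Context: Fix $\theta>0$. Write $\theta_{(0)}=1$ and $\theta_{(m)}=\theta(\theta+1)\cdots(\theta+m-1)$ for $m\ge1$. The Ewens Sampling Formula $\mathrm{ESF}(\theta)$ is the law of a random vector $(C_1(n),\ldots,C_n(n))$ of nonnegative integers with $$\mathbb{P}(C_1(n)=c_1,\ldots,C_n(n)=c_n)=\frac{n!}{\theta_{(n)}}\prod_{j=1}^n\Big(\frac{\theta}{j}\Big)^{c_j}\frac{1}{c_j!}\quad\text{whenever } \textstyle\sum_j jc_j=n$$ (these are the cycle counts of a random permutation of $\{1,\ldots,n\}$ chosen with probability $\theta^{k}/\theta_{(n)}$ when it has $k$ cycles). For $n\ge1$ let $\lambda_n(\theta)=\mathbb{P}(C_1(n)=0)=\frac{n!}{\theta_{(n)}}\sum_{j=0}^n(-1)^j\frac{\theta^j}{j!}\frac{\theta_{(n-j)}}{(n-j)!}$, and $\lambda_0(\theta)=1$; note $\lambda_1(\theta)=0$. Let $\xi_1,\xi_2,\ldots$ be independent Bernoulli random variables with $\mathbb{P}(\xi_i=1)=\theta/(\theta+i-1)$, $\mathbb{P}(\xi_i=0)=(i-1)/(\theta+i-1)$ (so $\xi_1=1$). For $n\ge2$, $\Delta_n$ is the set of $(a_n,a_{n-1},\ldots,a_1)\in\{0,1\}^n$ with $a_n=0$, $a_1=1$, and no index $2\le i\le n$ with $a_i=a_{i-1}=1$. (One has $\mathbb{P}((\xi_n,\ldots,\xi_1)\in\Delta_n)=\lambda_n(\theta)$.) For a finite $\{0,1\}$-sequence, a $j$-spacing is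 an occurrence of two consecutive 1s separated by exactly $j-1$ zeros, i.e. an occurrence of the pattern $1\,0^{j-1}\,1$. *)

theory Defs
  imports "HOL-Probability.Probability"
begin

text \<open>lambda_n(theta) = P(C_1(n) = 0) under ESF(theta), by the explicit formula;
  the rising factorial theta_(m) is pochhammer theta m.\<close>
definition lam :: "real \<Rightarrow> nat \<Rightarrow> real" where
  "lam \<theta> n = (if n = 0 then 1 else
     fact n / pochhammer \<theta> n *
     (\<Sum>j=0..n. (-1)^j * \<theta>^j / fact j * pochhammer \<theta> (n - j) / fact (n - j)))"

text \<open>Law of (xi_1,...,xi_n), as a random function {1..n} -> bool (False outside {1..n}),
  xi_i = 1 encoded as True.\<close>
definition xi_pmf :: "real \<Rightarrow> nat \<Rightarrow> (nat \<Rightarrow> bool) pmf" where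
  "xi_pmf \<theta> n = Pi_pmf {1..n} False (\<lambda>i. bernoulli_pmf (\<theta> / (\<theta> + real i - 1)))"

definition Delta :: "nat \<Rightarrow> (nat \<Rightarrow> bool) set" where
  "Delta n = {a. \<not> a n \<and> a 1 \<and> (\<forall>i\<in>{2..n}. \<not> (a i \<and> a (i - 1)))}"

definition eta_pmf :: "real \<Rightarrow> nat \<Rightarrow> (nat \<Rightarrow> bool) pmf" where
  "eta_pmf \<theta> n = cond_pmf (xi_pmf \<theta> n) (Delta n)"

definition eta_ext :: "nat \<Rightarrow> (nat \<Rightarrow> bool) \<Rightarrow> nat \<Rightarrow> bool" where
  "eta_ext n a = a(n + 1 := True)"

text \<open>Transition probability P(eta_r = b | eta_{r+1} = c).\<close>
definition trans_prob :: "real \<Rightarrow> nat \<Rightarrow> bool \<Rightarrow> bool \<Rightarrow> real" where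
  "trans_prob \<theta> r c b =
     (if c then (if b then 0 else 1)
      else (let D = (\<theta> + real r - 1) * lam \<theta> r + \<theta> * lam \<theta> (r - 1) in
            if b then \<theta> * lam \<theta> (r - 1) / D else (\<theta> + real r - 1) * lam \<theta> r / D))"

text \<open>Number of j-spacings (occurrences of 1 0^(j-1) 1) in the sequence
  1 eta_n ... eta_1, i.e. in eta_ext read at positions n+1 down to 1.\<close>
definition spacings :: "nat \<Rightarrow> (nat \<Rightarrow> bool) \<Rightarrow> nat \<Rightarrow> nat" where
  "spacings n a j = card {i \<in> {j+1..n+1}.
     eta_ext n a i \<and> eta_ext n a (i - j) \<and> (\<forall>k\<in>{i-j+1..i-1}. \<not> eta_ext n a k)}"

text \<open>Ewens Sampling Formula: support and point probabilities of (C_1(n),...,C_n(n)),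
  count vectors encoded as functions nat -> nat vanishing outside {1..n}.\<close>
definition esf_space :: "nat \<Rightarrow> (nat \<Rightarrow> nat) set" where
  "esf_space n = {c. (\<forall>k. k \<notin> {1..n} \<longrightarrow> c k = 0) \<and> (\<Sum>j=1..n. j * c j) = n}"

definition esf_weight :: "real \<Rightarrow> nat \<Rightarrow> (nat \<Rightarrow> nat) \<Rightarrow> real" where
  "esf_weight \<theta> n c = fact n / pochhammer \<theta> n *
     (\<Prod>j=1..n. (\<theta> / real j) ^ c j / fact (c j))"

definition esf_prob :: "real \<Rightarrow> nat \<Rightarrow> (nat \<Rightarrow> nat) set \<Rightarrow> real" where
  "esf_prob \<theta> n A = (\<Sum>c\<in>esf_space n \<inter> A. esf_weight \<theta> n c)"

end

theory Submission
  imports Defs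
begin

text \<open>The \<open>\<xi>\<^sub>i\<close> are independent, so conditioning on \<open>\<Delta>\<^sub>n\<close> is computed through products.
  Cutting \<open>\<xi>\<^sub>1, \<dots>, \<xi>\<^sub>n\<close> at position \<open>r\<close>, the event \<open>\<Delta>\<^sub>n\<close> splits into a condition on
  \<open>\<xi>\<^bsub>r+1\<^esub>, \<dots>, \<xi>\<^sub>n\<close> and one on \<open>\<xi>\<^sub>1, \<dots>, \<xi>\<^sub>r\<close> that sees the former only through
  \<open>\<xi>\<^bsub>r+1\<^esub>\<close>; this gives the Markov property, and the transition probabilities follow from
  \<open>P((\<xi>\<^sub>r, \<dots>, \<xi>\<^sub>1) \<in> \<Delta>\<^sub>r) = \<lambda>\<^sub>r(\<theta>)\<close>, proved by a two-term recursion that the explicit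
  formula for \<open>\<lambda>\<^sub>r\<close> also satisfies.

  For the spacings we use Feller's coupling: the numbers of \<open>j\<close>-spacings of \<open>1 \<xi>\<^sub>n \<dots> \<xi>\<^sub>1\<close>,
  \<open>j = 1, \<dots>, n\<close>, have law \<open>ESF(\<theta>)\<close> (induction on \<open>n\<close>, removing the last 1). Since \<open>\<xi>\<^sub>1 = 1\<close>,
  the event \<open>\<Delta>\<^sub>n\<close> is exactly the absence of 1-spacings, i.e. \<open>C\<^sub>1(n) = 0\<close>, and
  conditioning on it gives (ii).\<close>

definition xi_bern :: "real \<Rightarrow> nat \<Rightarrow> bool pmf" where
  "xi_bern \<theta> i = bernoulli_pmf (\<theta> / (\<theta> + real i - 1))"

definition xi_on :: "real \<Rightarrow> nat set \<Rightarrow> (nat \<Rightarrow> bool) pmf" where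
  "xi_on \<theta> A = Pi_pmf A False (xi_bern \<theta>)"

definition restrict_to :: "nat set \<Rightarrow> (nat \<Rightarrow> bool) \<Rightarrow> nat \<Rightarrow> bool" where
  "restrict_to A f x \<longleftrightarrow> x \<in> A \<and> f x"

definition admissible :: "nat \<Rightarrow> (nat \<Rightarrow> bool) set" where
  "admissible r = {a. a 1 \<and> (\<forall>i\<in>{2..r}. \<not> (a i \<and> a (i - 1)))}"

lemma xi_pmf_eq_xi_on: "xi_pmf \<theta> n = xi_on \<theta> {1..n}"
  by (simp add: xi_pmf_def xi_on_def xi_bern_def[abs_def])

lemma measure_pmf_prob_cong_support:
  assumes "\<And>f. f \<in> set_pmf M \<Longrightarrow> f \<in> X \<longleftrightarrow> f \<in> Y"
  shows "measure_pmf.prob M X = measure_pmf.prob M Y"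
  by (rule measure_prob_cong_0) (use assms in \<open>auto simp: set_pmf_eq\<close>)

lemma measure_cond_pmf:
  assumes "set_pmf p \<inter> s \<noteq> {}"
  shows "measure_pmf.prob (cond_pmf p s) A = measure_pmf.prob p (s \<inter> A) / measure_pmf.prob p s"
proof -
  have "measure_pmf (cond_pmf p s) = uniform_measure (measure_pmf p) s"
    by (rule cond_pmf.rep_eq[OF assms])
  moreover have "emeasure (measure_pmf p) s \<noteq> 0" by (rule emeasure_measure_pmf_not_zero[OF assms])
  ultimately show ?thesis by (simp add: measure_pmf.emeasure_eq_measure)
qed

lemma Delta_iff_admissible: "f \<in> Delta r \<longleftrightarrow> f \<in> admissible r \<and> \<not> f r"
  by (auto simp: admissible_def Delta_def)

lemma admissible_split:
  assumes "1 \<le> r" "r \<le> m"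
  shows "f \<in> admissible m \<longleftrightarrow> f \<in> admissible r \<and> (\<forall>i\<in>{r+1..m}. \<not> (f i \<and> f (i - 1)))"
proof -
  have "{2..m} = {2..r} \<union> {r+1..m}" using assms by auto
  thus ?thesis unfolding admissible_def by auto
qed

lemma admissible_Suc:
  assumes "2 \<le> r"
  shows "f \<in> admissible r \<longleftrightarrow> f \<in> admissible (r - 1) \<and> \<not> (f r \<and> f (r - 1))"
  using admissible_split[of "r - 1" r f] assms by auto

lemma admissible_restrict_to:
  assumes "1 \<le> r"
  shows "restrict_to {1..r} f \<in> admissible r \<longleftrightarrow> f \<in> admissible r"
proof -
  have "\<forall>i\<in>{2..r}. i - 1 \<in> {1..r} \<and> i \<in> {1..r}" by auto
  thus ?thesis unfolding admissible_def restrict_to_def using assms by auto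
qed

lemma Delta_restrict_to: "1 \<le> r \<Longrightarrow> restrict_to {1..r} f \<in> Delta r \<longleftrightarrow> f \<in> Delta r"
  using admissible_restrict_to[of r f] by (simp add: Delta_iff_admissible restrict_to_def)

context
  fixes \<theta> :: real
  assumes \<theta>_pos: "\<theta> > 0"
begin

lemma pmf_xi_bern_True: "1 \<le> i \<Longrightarrow> pmf (xi_bern \<theta> i) True = \<theta> / (\<theta> + real i - 1)"
  using \<theta>_pos by (simp add: xi_bern_def)

lemma pmf_xi_bern_False: "1 \<le> i \<Longrightarrow> pmf (xi_bern \<theta> i) False = (real i - 1) / (\<theta> + real i - 1)"
  using \<theta>_pos by (simp add: xi_bern_def field_simps)

lemma set_pmf_xi_bern_1: "set_pmf (xi_bern \<theta> 1) = {True}"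
proof -
  have "set_pmf (bernoulli_pmf (1::real)) = {True}"
    by (auto simp: set_pmf_eq) (metis (full_types) diff_self pmf_bernoulli_False order_refl zero_le_one)
  thus ?thesis using \<theta>_pos by (simp add: xi_bern_def)
qed

lemma set_pmf_xi_bern_ge_2: "2 \<le> i \<Longrightarrow> set_pmf (xi_bern \<theta> i) = UNIV"
  using \<theta>_pos by (simp add: xi_bern_def)

lemma xi_on_outside: "finite A \<Longrightarrow> f \<in> set_pmf (xi_on \<theta> A) \<Longrightarrow> x \<notin> A \<Longrightarrow> \<not> f x"
  by (auto simp: xi_on_def set_Pi_pmf PiE_dflt_def)

lemma xi_on_1: "finite A \<Longrightarrow> f \<in> set_pmf (xi_on \<theta> A) \<Longrightarrow> 1 \<in> A \<Longrightarrow> f 1"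
  using set_pmf_xi_bern_1 by (auto simp: xi_on_def set_Pi_pmf PiE_dflt_def)

lemma indicator_of_1_in_xi_on: "1 \<le> n \<Longrightarrow> (\<lambda>i. i = 1) \<in> set_pmf (xi_on \<theta> {1..n})"
proof -
  have "(i = 1) \<in> set_pmf (xi_bern \<theta> i)" if "i \<in> {1..n}" for i
    using that set_pmf_xi_bern_1 set_pmf_xi_bern_ge_2[of i] by (cases "i = 1") auto
  thus "1 \<le> n \<Longrightarrow> ?thesis" by (auto simp: xi_on_def set_Pi_pmf PiE_dflt_def)
qed

lemma prob_xi_on_Un:
  assumes "finite A" "finite B" "A \<inter> B = {}"
    and "\<And>f. f \<in> set_pmf (xi_on \<theta> (A \<union> B)) \<Longrightarrow>
           f \<in> X \<longleftrightarrow> P (restrict_to A f) \<and> R (restrict_to B f)"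
  shows "measure_pmf.prob (xi_on \<theta> (A \<union> B)) X
       = measure_pmf.prob (xi_on \<theta> A) {f. P f} * measure_pmf.prob (xi_on \<theta> B) {f. R f}"
proof -
  let ?h = "\<lambda>(f::nat\<Rightarrow>bool,g::nat\<Rightarrow>bool) x. if x \<in> A then f x else g x"
  let ?M = "pair_pmf (xi_on \<theta> A) (xi_on \<theta> B)"
  have U: "xi_on \<theta> (A \<union> B) = map_pmf ?h ?M"
    unfolding xi_on_def by (rule Pi_pmf_union[OF assms(1-3)])
  let ?SP = "{f \<in> set_pmf (xi_on \<theta> A). P f}" and ?SR = "{f \<in> set_pmf (xi_on \<theta> B). R f}"
  have "measure_pmf.prob (xi_on \<theta> (A \<union> B)) X = measure_pmf.prob ?M (?h -` X)"
    by (simp add: U)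
  also have "\<dots> = measure_pmf.prob ?M (?SP \<times> ?SR)"
  proof (rule measure_pmf_prob_cong_support)
    fix z assume z: "z \<in> set_pmf ?M"
    obtain f g where fg: "z = (f, g)" by (cases z)
    have f: "f \<in> set_pmf (xi_on \<theta> A)" and g: "g \<in> set_pmf (xi_on \<theta> B)" using z fg by auto
    have "restrict_to A (?h z) = f" "restrict_to B (?h z) = g"
      using xi_on_outside[OF assms(1) f] xi_on_outside[OF assms(2) g] fg assms(3)
      by (auto simp: restrict_to_def fun_eq_iff)
    moreover have "?h z \<in> set_pmf (xi_on \<theta> (A \<union> B))" using z U by simp
    ultimately show "z \<in> ?h -` X \<longleftrightarrow> z \<in> ?SP \<times> ?SR"
      using assms(4) f g fg by auto
  qed
  also have "\<dots> = measure_pmf.prob (xi_on \<theta> A) ?SP * measure_pmf.prob (xi_on \<theta> B) ?SR"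
    by (rule measure_pmf_prob_product) (auto intro: countable_subset[OF _ countable_set_pmf])
  also have "measure_pmf.prob (xi_on \<theta> A) ?SP = measure_pmf.prob (xi_on \<theta> A) {f. P f}"
    by (rule measure_pmf_prob_cong_support) auto
  also have "measure_pmf.prob (xi_on \<theta> B) ?SR = measure_pmf.prob (xi_on \<theta> B) {f. R f}"
    by (rule measure_pmf_prob_cong_support) auto
  finally show ?thesis .
qed

lemma prob_xi_on_pattern:
  assumes "finite A"
  shows "measure_pmf.prob (xi_on \<theta> A) {f. \<forall>i\<in>A. f i = z i} = (\<Prod>i\<in>A. pmf (xi_bern \<theta> i) (z i))"
proof -
  have "measure_pmf.prob (xi_on \<theta> A) {f. \<forall>i\<in>A. f i = z i}
      = measure_pmf.prob (xi_on \<theta> A) {restrict_to A z}"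
    by (rule measure_pmf_prob_cong_support)
       (use xi_on_outside[OF assms] in \<open>auto simp: restrict_to_def fun_eq_iff\<close>)
  also have "\<dots> = (\<Prod>i\<in>A. pmf (xi_bern \<theta> i) (z i))"
    using assms by (simp add: measure_pmf_single xi_on_def pmf_Pi restrict_to_def)
  finally show ?thesis .
qed

lemma prob_xi_on_single_True: "1 \<le> i \<Longrightarrow> measure_pmf.prob (xi_on \<theta> {i}) {f. f i} = \<theta> / (\<theta> + real i - 1)"
  using prob_xi_on_pattern[of "{i}" "\<lambda>_. True"] pmf_xi_bern_True by simp

lemma prob_xi_on_single_False: "1 \<le> i \<Longrightarrow> measure_pmf.prob (xi_on \<theta> {i}) {f. \<not> f i} = (real i - 1) / (\<theta> + real i - 1)"
  using prob_xi_on_pattern[of "{i}" "\<lambda>_. False"] pmf_xi_bern_False by simp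

lemma prob_admissible_last_True:
  assumes "2 \<le> r"
  shows "measure_pmf.prob (xi_on \<theta> {1..r}) {a \<in> admissible r. a r}
       = \<theta> / (\<theta> + real r - 1) * measure_pmf.prob (xi_on \<theta> {1..r-1}) (Delta (r - 1))"
proof -
  have "measure_pmf.prob (xi_on \<theta> ({1..r-1} \<union> {r})) {a \<in> admissible r. a r}
      = measure_pmf.prob (xi_on \<theta> {1..r-1}) {f. f \<in> Delta (r - 1)} * measure_pmf.prob (xi_on \<theta> {r}) {f. f r}"
  proof (rule prob_xi_on_Un)
    fix f :: "nat \<Rightarrow> bool"
    show "f \<in> {a \<in> admissible r. a r}
        \<longleftrightarrow> restrict_to {1..r-1} f \<in> Delta (r - 1) \<and> restrict_to {r} f r"
      using assms Delta_restrict_to[of "r - 1" f] admissible_Suc[of r f] Delta_iff_admissible[of f "r - 1"]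
      by (auto simp: restrict_to_def)
  qed auto
  moreover have "{1..r-1} \<union> {r} = {1..r}" using assms by auto
  ultimately show ?thesis using prob_xi_on_single_True[of r] assms by simp
qed

lemma prob_Delta_eq_admissible:
  assumes "2 \<le> r"
  shows "measure_pmf.prob (xi_on \<theta> {1..r}) (Delta r)
       = (real r - 1) / (\<theta> + real r - 1) * measure_pmf.prob (xi_on \<theta> {1..r-1}) (admissible (r - 1))"
proof -
  have "measure_pmf.prob (xi_on \<theta> ({1..r-1} \<union> {r})) (Delta r)
      = measure_pmf.prob (xi_on \<theta> {1..r-1}) {f. f \<in> admissible (r - 1)} * measure_pmf.prob (xi_on \<theta> {r}) {f. \<not> f r}"
  proof (rule prob_xi_on_Un)
    fix f :: "nat \<Rightarrow> bool"
    show "f \<in> Delta r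
        \<longleftrightarrow> restrict_to {1..r-1} f \<in> admissible (r - 1) \<and> \<not> restrict_to {r} f r"
      using assms admissible_restrict_to[of "r - 1" f] admissible_Suc[of r f] Delta_iff_admissible[of f r]
      by (auto simp: restrict_to_def)
  qed auto
  moreover have "{1..r-1} \<union> {r} = {1..r}" using assms by auto
  ultimately show ?thesis using prob_xi_on_single_False[of r] assms by simp
qed

lemma prob_admissible_eq:
  "measure_pmf.prob (xi_on \<theta> {1..r}) (admissible r)
   = measure_pmf.prob (xi_on \<theta> {1..r}) (Delta r) + measure_pmf.prob (xi_on \<theta> {1..r}) {a \<in> admissible r. a r}"
proof -
  have split: "Delta r \<union> {a \<in> admissible r. a r} = admissible r"
    and disjoint: "Delta r \<inter> {a \<in> admissible r. a r} = {}"
    by (auto simp: Delta_iff_admissible)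
  have "measure_pmf.prob (xi_on \<theta> {1..r}) (Delta r \<union> {a \<in> admissible r. a r})
     = measure_pmf.prob (xi_on \<theta> {1..r}) (Delta r) + measure_pmf.prob (xi_on \<theta> {1..r}) {a \<in> admissible r. a r}"
    by (rule measure_pmf.finite_measure_Union) (use disjoint in auto)
  thus ?thesis by (simp only: split)
qed

lemma prob_admissible_1: "measure_pmf.prob (xi_on \<theta> {1..1}) (admissible 1) = 1"
proof -
  have "measure_pmf.prob (xi_on \<theta> {1}) (admissible 1) = measure_pmf.prob (xi_on \<theta> {1}) {f. f 1}"
    by (rule measure_pmf_prob_cong_support) (auto simp: admissible_def)
  thus ?thesis using prob_xi_on_single_True[of 1] \<theta>_pos by simp
qed

lemma prob_Delta_pos:
  assumes "2 \<le> n" "Delta n \<subseteq> X"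
  shows "measure_pmf.prob (xi_on \<theta> {1..n}) X > 0"
  by (rule measure_pmf_posI[OF indicator_of_1_in_xi_on]) (use assms in \<open>auto simp: Delta_def\<close>)

end

text \<open>Up to the factor \<open>n!/\<theta>\<^bsub>(n)\<^esub>\<close>, \<open>\<lambda>\<^sub>n(\<theta>)\<close> is the \<open>n\<close>-th Taylor coefficient of
  \<open>e\<^bsup>-\<theta>x\<^esup> (1 - x)\<^bsup>-\<theta>\<^esup>\<close>, the Cauchy product of the coefficients below; the differential
  equation \<open>(1 - x) f' = \<theta> x f\<close> of this function is behind \<open>lam_coeff_rec\<close>.\<close>

definition exp_coeff :: "real \<Rightarrow> nat \<Rightarrow> real" where
  "exp_coeff \<theta> j = (- \<theta>) ^ j / fact j"

definition binom_coeff :: "real \<Rightarrow> nat \<Rightarrow> real" where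
  "binom_coeff \<theta> m = pochhammer \<theta> m / fact m"

definition lam_coeff :: "real \<Rightarrow> nat \<Rightarrow> real" where
  "lam_coeff \<theta> n = (\<Sum>j\<le>n. exp_coeff \<theta> j * binom_coeff \<theta> (n - j))"

lemma binom_coeff_Suc: "real (Suc m) * binom_coeff \<theta> (Suc m) = (\<theta> + m) * binom_coeff \<theta> m"
proof -
  have "fact (Suc m) = real (Suc m) * (fact m :: real)" by (simp only: fact_Suc of_nat_mult)
  thus ?thesis unfolding binom_coeff_def pochhammer_Suc by (simp add: field_simps del: of_nat_Suc)
qed

lemma exp_coeff_Suc: "real (Suc j) * exp_coeff \<theta> (Suc j) = - \<theta> * exp_coeff \<theta> j"
proof -
  have "fact (Suc j) = real (Suc j) * (fact j :: real)" by (simp only: fact_Suc of_nat_mult)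
  thus ?thesis unfolding exp_coeff_def by (simp add: field_simps del: of_nat_Suc)
qed

lemma sum_derivative_exp_coeff:
  "(\<Sum>j\<le>Suc N. real j * exp_coeff \<theta> j * binom_coeff \<theta> (Suc N - j)) = - \<theta> * lam_coeff \<theta> N"
proof -
  have "(\<Sum>j\<le>Suc N. real j * exp_coeff \<theta> j * binom_coeff \<theta> (Suc N - j))
      = (\<Sum>j\<le>N. real (Suc j) * exp_coeff \<theta> (Suc j) * binom_coeff \<theta> (N - j))"
    by (subst sum.atMost_Suc_shift) simp
  also have "\<dots> = - \<theta> * lam_coeff \<theta> N"
    unfolding lam_coeff_def sum_distrib_left by (intro sum.cong refl) (simp add: exp_coeff_Suc[simplified])
  finally show ?thesis .
qed

lemma sum_derivative_binom_coeff:
  "(\<Sum>j\<le>Suc N. exp_coeff \<theta> j * (real (Suc N - j) * binom_coeff \<theta> (Suc N - j)))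
   = (\<theta> + real N) * lam_coeff \<theta> N - (\<Sum>j\<le>N. real j * exp_coeff \<theta> j * binom_coeff \<theta> (N - j))"
proof -
  have "(\<Sum>j\<le>Suc N. exp_coeff \<theta> j * (real (Suc N - j) * binom_coeff \<theta> (Suc N - j)))
      = (\<Sum>j\<le>N. exp_coeff \<theta> j * ((\<theta> + real (N - j)) * binom_coeff \<theta> (N - j)))"
  proof -
    have "(\<Sum>j\<le>Suc N. exp_coeff \<theta> j * (real (Suc N - j) * binom_coeff \<theta> (Suc N - j)))
        = (\<Sum>j\<le>N. exp_coeff \<theta> j * (real (Suc N - j) * binom_coeff \<theta> (Suc N - j)))"
      by (simp add: sum.atMost_Suc)
    also have "\<dots> = (\<Sum>j\<le>N. exp_coeff \<theta> j * ((\<theta> + real (N - j)) * binom_coeff \<theta> (N - j)))"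
    proof (intro sum.cong refl)
      fix j assume "j \<in> {..N}"
      hence "Suc N - j = Suc (N - j)" by auto
      thus "exp_coeff \<theta> j * (real (Suc N - j) * binom_coeff \<theta> (Suc N - j))
          = exp_coeff \<theta> j * ((\<theta> + real (N - j)) * binom_coeff \<theta> (N - j))"
        by (simp only: binom_coeff_Suc)
    qed
    finally show ?thesis .
  qed
  also have "\<dots> = (\<theta> + real N) * lam_coeff \<theta> N - (\<Sum>j\<le>N. real j * exp_coeff \<theta> j * binom_coeff \<theta> (N - j))"
    unfolding lam_coeff_def sum_distrib_left sum_subtractf[symmetric]
    by (intro sum.cong refl) (auto simp: of_nat_diff algebra_simps)
  finally show ?thesis .
qed

lemma lam_coeff_rec:
  "real (Suc (Suc m)) * lam_coeff \<theta> (Suc (Suc m))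
   = real (Suc m) * lam_coeff \<theta> (Suc m) + \<theta> * lam_coeff \<theta> m"
proof -
  define N where "N = Suc m"
  have "real (Suc N) * lam_coeff \<theta> (Suc N)
      = (\<Sum>j\<le>Suc N. exp_coeff \<theta> j * (real (Suc N - j) * binom_coeff \<theta> (Suc N - j)))
      + (\<Sum>j\<le>Suc N. real j * exp_coeff \<theta> j * binom_coeff \<theta> (Suc N - j))"
    unfolding lam_coeff_def sum_distrib_left sum.distrib[symmetric]
    by (intro sum.cong refl) (auto simp: of_nat_diff algebra_simps)
  also have "\<dots> = real N * lam_coeff \<theta> N + \<theta> * lam_coeff \<theta> m"
    unfolding sum_derivative_binom_coeff sum_derivative_exp_coeff
    using sum_derivative_exp_coeff[of \<theta> m] by (simp add: N_def algebra_simps)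
  finally show ?thesis by (simp add: N_def)
qed

lemma lam_eq_lam_coeff: "lam \<theta> n = fact n / pochhammer \<theta> n * lam_coeff \<theta> n"
proof (cases "n = 0")
  case True thus ?thesis by (simp add: lam_def lam_coeff_def exp_coeff_def binom_coeff_def)
next
  case False
  have "(\<Sum>j=0..n. (-1)^j * \<theta>^j / fact j * pochhammer \<theta> (n - j) / fact (n - j)) = lam_coeff \<theta> n"
    unfolding lam_coeff_def atLeast0AtMost
    by (intro sum.cong refl) (simp add: exp_coeff_def binom_coeff_def power_minus[of \<theta>])
  with False show ?thesis by (simp add: lam_def)
qed

lemma lam_rec:
  assumes "\<theta> > 0"
  shows "lam \<theta> (Suc (Suc n))
       = real (Suc n) / (\<theta> + real n + 1) * (lam \<theta> (Suc n) + \<theta> / (\<theta> + real n) * lam \<theta> n)"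
proof -
  define P where "P = pochhammer \<theta> n"
  define F where "F = (fact n :: real)"
  have nonzero: "P \<noteq> 0" "F \<noteq> 0" "\<theta> + real n \<noteq> 0" "\<theta> + real n + 1 \<noteq> 0"
    using assms pochhammer_pos[of \<theta> n] by (auto simp: P_def F_def)
  have "lam \<theta> (Suc (Suc n))
      = real (Suc n) * F / (P * (\<theta> + real n) * (\<theta> + real n + 1))
        * (real (Suc (Suc n)) * lam_coeff \<theta> (Suc (Suc n)))"
    unfolding lam_eq_lam_coeff[of \<theta> "Suc (Suc n)"] P_def F_def
    by (simp add: pochhammer_Suc algebra_simps)
  also have "\<dots> = real (Suc n) * F / (P * (\<theta> + real n) * (\<theta> + real n + 1))
        * (real (Suc n) * lam_coeff \<theta> (Suc n) + \<theta> * lam_coeff \<theta> n)"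
    by (simp only: lam_coeff_rec)
  also have "\<dots> = real (Suc n) / (\<theta> + real n + 1) * (lam \<theta> (Suc n) + \<theta> / (\<theta> + real n) * lam \<theta> n)"
  proof -
    have p: "pochhammer \<theta> (Suc n) = P * (\<theta> + real n)" and f: "fact (Suc n) = real (Suc n) * F"
      by (simp_all add: P_def F_def pochhammer_Suc)
    have field_identity: "k * F / (P * a * b) * (k * s1 + t * s0) = k / b * (k * F / (P * a) * s1 + t / a * (F / P * s0))"
      if "a \<noteq> 0" "b \<noteq> 0" for k t a b s1 s0 :: real
      using that nonzero by (simp add: field_simps)
    show ?thesis
      unfolding lam_eq_lam_coeff[of \<theta> "Suc n"] lam_eq_lam_coeff[of \<theta> n] p f P_def[symmetric] F_def[symmetric]
      by (rule field_identity) (use nonzero in auto)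
  qed
  finally show ?thesis .
qed

lemma lam_1: "lam \<theta> 1 = 0"
  by (simp add: lam_eq_lam_coeff lam_coeff_def exp_coeff_def binom_coeff_def)

lemma lam_2:
  assumes "\<theta> > 0"
  shows "lam \<theta> 2 = 1 / (\<theta> + 1)"
proof -
  have "\<theta> + \<theta> * \<theta> > 0" using assms by (intro add_pos_pos mult_pos_pos)
  moreover have "1 + \<theta> \<noteq> 0" using assms by simp
  ultimately
  show ?thesis
    by (simp add: lam_eq_lam_coeff lam_coeff_def exp_coeff_def binom_coeff_def numeral_2_eq_2
      pochhammer_Suc field_simps power2_eq_square)
qed

context
  fixes \<theta> :: real
  assumes \<theta>_pos: "\<theta> > 0"
begin

lemma prob_xi_on_Delta: "1 \<le> r \<Longrightarrow> measure_pmf.prob (xi_on \<theta> {1..r}) (Delta r) = lam \<theta> r"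
proof (induction r rule: nat_less_induct)
  case (1 r)
  consider "r = 1" | "r = 2" | n where "r = Suc (Suc n)" "1 \<le> n"
    using "1.prems" by (metis One_nat_def Suc_1 Suc_le_D le_SucE le_antisym not_less_eq_eq)
  then show ?case
  proof cases
    case 1
    thus ?thesis using lam_1 by (simp add: Delta_def)
  next
    case 2
    thus ?thesis
      using prob_Delta_eq_admissible[OF \<theta>_pos, of 2] prob_admissible_1[OF \<theta>_pos] lam_2[OF \<theta>_pos] by simp
  next
    case (3 n)
    have IH: "measure_pmf.prob (xi_on \<theta> {1..Suc n}) (Delta (Suc n)) = lam \<theta> (Suc n)"
      "measure_pmf.prob (xi_on \<theta> {1..n}) (Delta n) = lam \<theta> n"
      using "1.IH" 3 by auto
    have "measure_pmf.prob (xi_on \<theta> {1..Suc n}) (admissible (Suc n))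
        = lam \<theta> (Suc n) + \<theta> / (\<theta> + real n) * lam \<theta> n"
      using prob_admissible_eq[OF \<theta>_pos, of "Suc n"] prob_admissible_last_True[OF \<theta>_pos, of "Suc n"] IH 3
      by simp
    thus ?thesis
      using prob_Delta_eq_admissible[OF \<theta>_pos, of r] lam_rec[OF \<theta>_pos, of n] 3 by simp
  qed
qed

lemma prob_eta_pmf:
  assumes "2 \<le> n"
  shows "measure_pmf.prob (eta_pmf \<theta> n) X
       = measure_pmf.prob (xi_on \<theta> {1..n}) (Delta n \<inter> X) / measure_pmf.prob (xi_on \<theta> {1..n}) (Delta n)"
proof -
  have "(\<lambda>i. i = 1) \<in> set_pmf (xi_on \<theta> {1..n}) \<inter> Delta n"
    using indicator_of_1_in_xi_on[OF \<theta>_pos] assms by (auto simp: Delta_def)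
  hence "set_pmf (xi_on \<theta> {1..n}) \<inter> Delta n \<noteq> {}" by blast
  thus ?thesis unfolding eta_pmf_def xi_pmf_eq_xi_on by (rule measure_cond_pmf)
qed

lemma prob_eta_pmf_eq_1: "2 \<le> n \<Longrightarrow> Delta n \<subseteq> X \<Longrightarrow> measure_pmf.prob (eta_pmf \<theta> n) X = 1"
  using prob_eta_pmf[of n X] prob_Delta_pos[OF \<theta>_pos, of n "Delta n"] by (simp add: Int_absorb2)

lemma prob_admissible_lam:
  assumes "2 \<le> r"
  shows "measure_pmf.prob (xi_on \<theta> {1..r}) (admissible r)
       = lam \<theta> r + \<theta> / (\<theta> + real r - 1) * lam \<theta> (r - 1)"
  using prob_admissible_eq[OF \<theta>_pos, of r] prob_admissible_last_True[OF \<theta>_pos assms]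
    prob_xi_on_Delta[of r] prob_xi_on_Delta[of "r - 1"] assms
  by simp

text \<open>Given the values \<open>h\<close> of \<open>\<eta>\<^bsub>n+1\<^esub>, \<dots>, \<eta>\<^bsub>r+1\<^esub>\<close>, the constraint \<open>\<Delta>\<^sub>n\<close> splits into one on
  these values and one on \<open>\<xi>\<^sub>1, \<dots>, \<xi>\<^sub>r\<close> which only involves \<open>h (r + 1)\<close>:
  this independence is the Markov property.\<close>

lemma prob_Delta_window_factor:
  assumes r: "1 \<le> r" "r + 1 \<le> n"
  shows "measure_pmf.prob (xi_on \<theta> {1..n})
      {a. (\<forall>k\<in>{r+1..n+1}. eta_ext n a k = h k) \<and> a \<in> Delta n \<and> B (a r)}
    = measure_pmf.prob (xi_on \<theta> {r+1..n})
        {u. (\<forall>k\<in>{r+1..n+1}. eta_ext n u k = h k) \<and> \<not> u n \<and> (\<forall>i\<in>{r+2..n}. \<not> (u i \<and> u (i - 1)))}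
    * measure_pmf.prob (xi_on \<theta> {1..r}) {l. l \<in> admissible r \<and> \<not> (h (r+1) \<and> l r) \<and> B (l r)}"
proof -
  have "measure_pmf.prob (xi_on \<theta> ({1..r} \<union> {r+1..n}))
      {a. (\<forall>k\<in>{r+1..n+1}. eta_ext n a k = h k) \<and> a \<in> Delta n \<and> B (a r)}
    = measure_pmf.prob (xi_on \<theta> {1..r}) {l. l \<in> admissible r \<and> \<not> (h (r+1) \<and> l r) \<and> B (l r)}
    * measure_pmf.prob (xi_on \<theta> {r+1..n})
        {u. (\<forall>k\<in>{r+1..n+1}. eta_ext n u k = h k) \<and> \<not> u n \<and> (\<forall>i\<in>{r+2..n}. \<not> (u i \<and> u (i - 1)))}"
  proof (rule prob_xi_on_Un[OF \<theta>_pos])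
    fix f :: "nat \<Rightarrow> bool"
    let ?l = "restrict_to {1..r} f" and ?u = "restrict_to {r+1..n} f"
    have window: "(\<forall>k\<in>{r+1..n+1}. eta_ext n ?u k = h k) \<longleftrightarrow> (\<forall>k\<in>{r+1..n+1}. eta_ext n f k = h k)"
      by (auto simp: eta_ext_def restrict_to_def)
    have upper: "(\<forall>i\<in>{r+2..n}. \<not> (?u i \<and> ?u (i - 1))) \<longleftrightarrow> (\<forall>i\<in>{r+2..n}. \<not> (f i \<and> f (i - 1)))"
      by (auto simp: restrict_to_def)
    have "{r+1..n} = insert (r+1) {r+2..n}" using r by auto
    hence Delta_split: "f \<in> Delta n \<longleftrightarrow> f \<in> admissible r \<and> \<not> (f (r+1) \<and> f r)
        \<and> (\<forall>i\<in>{r+2..n}. \<not> (f i \<and> f (i - 1))) \<and> \<not> f n"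
      using Delta_iff_admissible[of f n] admissible_split[OF r(1), of n f] r by auto
    have "(\<forall>k\<in>{r+1..n+1}. eta_ext n f k = h k) \<Longrightarrow> f (r+1) = h (r+1)"
      using r by (auto simp: eta_ext_def dest: bspec[of _ _ "r+1"])
    moreover have "?l r = f r" "?u n = f n" using r by (simp_all add: restrict_to_def)
    ultimately show "f \<in> {a. (\<forall>k\<in>{r+1..n+1}. eta_ext n a k = h k) \<and> a \<in> Delta n \<and> B (a r)} \<longleftrightarrow>
        (?l \<in> admissible r \<and> \<not> (h (r+1) \<and> ?l r) \<and> B (?l r)) \<and>
        ((\<forall>k\<in>{r+1..n+1}. eta_ext n ?u k = h k) \<and> \<not> ?u n \<and> (\<forall>i\<in>{r+2..n}. \<not> (?u i \<and> ?u (i - 1))))"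
      using admissible_restrict_to[OF r(1), of f] window upper Delta_split by auto
  qed auto
  moreover have "{1..r} \<union> {r+1..n} = {1..n}" using r by auto
  ultimately show ?thesis by (simp add: mult.commute)
qed

lemma transition_ratio:
  assumes r: "2 \<le> r"
  shows "measure_pmf.prob (xi_on \<theta> {1..r}) {l. l \<in> admissible r \<and> \<not> (c \<and> l r) \<and> l r = b}
       / measure_pmf.prob (xi_on \<theta> {1..r}) {l. l \<in> admissible r \<and> \<not> (c \<and> l r)}
       = trans_prob \<theta> r c b"
proof (cases c)
  case True
  have "measure_pmf.prob (xi_on \<theta> {1..r}) {l. l \<in> admissible r \<and> \<not> (c \<and> l r)} > 0"
    by (rule prob_Delta_pos[OF \<theta>_pos r]) (auto simp: True Delta_iff_admissible)
  thus ?thesis using True by (cases b) (simp_all add: trans_prob_def)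
next
  case False
  define K where "K = \<theta> + real r - 1"
  have K: "K > 0" using \<theta>_pos r by (simp add: K_def)
  have "measure_pmf.prob (xi_on \<theta> {1..r}) {l. l \<in> admissible r \<and> \<not> (c \<and> l r)}
      = (K * lam \<theta> r + \<theta> * lam \<theta> (r - 1)) / K"
    using prob_admissible_lam[OF r] False K by (simp add: K_def field_simps)
  moreover have "{l. l \<in> admissible r \<and> \<not> (c \<and> l r) \<and> l r = b}
      = (if b then {a \<in> admissible r. a r} else Delta r)"
    using False by (auto simp: Delta_iff_admissible)
  hence "measure_pmf.prob (xi_on \<theta> {1..r}) {l. l \<in> admissible r \<and> \<not> (c \<and> l r) \<and> l r = b}
      = (if b then \<theta> * lam \<theta> (r - 1) else K * lam \<theta> r) / K"
    using prob_admissible_last_True[OF \<theta>_pos r] prob_xi_on_Delta[of r]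
      prob_xi_on_Delta[of "r - 1"] r K
    by (simp add: K_def)
  ultimately show ?thesis using False K by (simp add: trans_prob_def Let_def K_def)
qed

lemma eta_transition:
  assumes r: "2 \<le> r" "r + 1 \<le> n"
    and pos: "measure_pmf.prob (eta_pmf \<theta> n) {a. \<forall>k\<in>{r+1..n+1}. eta_ext n a k = h k} > 0"
  shows "measure_pmf.prob (eta_pmf \<theta> n) {a. a r = b \<and> (\<forall>k\<in>{r+1..n+1}. eta_ext n a k = h k)}
       / measure_pmf.prob (eta_pmf \<theta> n) {a. \<forall>k\<in>{r+1..n+1}. eta_ext n a k = h k}
       = trans_prob \<theta> r (h (r + 1)) b"
proof -
  define U where "U = measure_pmf.prob (xi_on \<theta> {r+1..n})
    {u. (\<forall>k\<in>{r+1..n+1}. eta_ext n u k = h k) \<and> \<not> u n \<and> (\<forall>i\<in>{r+2..n}. \<not> (u i \<and> u (i - 1)))}"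
  define L where "L B = measure_pmf.prob (xi_on \<theta> {1..r}) {l. l \<in> admissible r \<and> \<not> (h (r+1) \<and> l r) \<and> B (l r)}"
    for B :: "bool \<Rightarrow> bool"
  define D where "D = measure_pmf.prob (xi_on \<theta> {1..n}) (Delta n)"
  have eta: "measure_pmf.prob (eta_pmf \<theta> n) {a. (\<forall>k\<in>{r+1..n+1}. eta_ext n a k = h k) \<and> B (a r)}
      = U * L B / D" for B
  proof -
    have "Delta n \<inter> {a. (\<forall>k\<in>{r+1..n+1}. eta_ext n a k = h k) \<and> B (a r)}
        = {a. (\<forall>k\<in>{r+1..n+1}. eta_ext n a k = h k) \<and> a \<in> Delta n \<and> B (a r)}" by blast
    thus ?thesis
      using prob_eta_pmf[of n] prob_Delta_window_factor[of r n h B] r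
      unfolding U_def L_def D_def by simp
  qed
  have "measure_pmf.prob (eta_pmf \<theta> n) {a. a r = b \<and> (\<forall>k\<in>{r+1..n+1}. eta_ext n a k = h k)}
      / measure_pmf.prob (eta_pmf \<theta> n) {a. \<forall>k\<in>{r+1..n+1}. eta_ext n a k = h k}
      = (U * L (\<lambda>x. x = b) / D) / (U * L (\<lambda>_. True) / D)"
    using eta[of "\<lambda>x. x = b"] eta[of "\<lambda>_. True"] by (simp add: conj_commute)
  also have "\<dots> = L (\<lambda>x. x = b) / L (\<lambda>_. True)"
  proof -
    have "U * L (\<lambda>_. True) / D > 0" using pos eta[of "\<lambda>_. True"] by simp
    hence "U \<noteq> 0" "L (\<lambda>_. True) \<noteq> 0" "D \<noteq> 0" by auto
    thus ?thesis by simp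
  qed
  also have "\<dots> = trans_prob \<theta> r (h (r + 1)) b"
    unfolding L_def using transition_ratio[OF r(1)] by simp
  finally show ?thesis .
qed

end

definition ends_spacing :: "(nat \<Rightarrow> bool) \<Rightarrow> nat \<Rightarrow> nat \<Rightarrow> bool" where
  "ends_spacing e j i \<longleftrightarrow> e i \<and> e (i - j) \<and> (\<forall>k\<in>{i-j+1..i-1}. \<not> e k)"

definition spacing_counts :: "nat \<Rightarrow> (nat \<Rightarrow> bool) \<Rightarrow> nat \<Rightarrow> nat" where
  "spacing_counts n a j = (if j \<in> {1..n} then spacings n a j else 0)"

lemma spacings_eq_card: "spacings n a j = card {i \<in> {j+1..n+1}. ends_spacing (eta_ext n a) j i}"
  by (simp add: spacings_def ends_spacing_def)

lemma ends_spacing_cong: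
  "(\<And>k. i - j \<le> k \<Longrightarrow> k \<le> i \<Longrightarrow> e k = e' k) \<Longrightarrow> ends_spacing e j i \<longleftrightarrow> ends_spacing e' j i"
  unfolding ends_spacing_def by (metis (no_types, lifting) atLeastAtMost_iff diff_le_self le_diff_conv
      le_refl Suc_eq_plus1 Suc_leD le_trans)

lemma ends_spacing_after_last_one:
  assumes "1 \<le> m" "m < i" "1 \<le> j" and "e m" and gap: "\<forall>k\<in>{m+1..i-1}. \<not> e k"
  shows "ends_spacing e j i \<longleftrightarrow> e i \<and> j = i - m"
proof
  assume spacing: "ends_spacing e j i"
  have "i - j \<ge> m"
  proof (rule ccontr)
    assume "\<not> i - j \<ge> m"
    hence "m \<in> {i-j+1..i-1}" using assms by auto
    thus False using spacing \<open>e m\<close> by (auto simp: ends_spacing_def)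
  qed
  moreover have "\<not> i - j > m" using spacing gap assms by (auto simp: ends_spacing_def)
  ultimately show "e i \<and> j = i - m" using spacing assms by (auto simp: ends_spacing_def)
qed (use assms in \<open>auto simp: ends_spacing_def\<close>)

text \<open>Removing the last 1 of \<open>\<eta>\<close>, at position \<open>m\<close>, removes exactly one spacing, the one of
  length \<open>n + 1 - m\<close> ending at the artificial \<open>\<eta>\<^bsub>n+1\<^esub> = 1\<close>.\<close>

lemma spacings_remove_last_one:
  assumes m: "1 \<le> m" "m \<le> n" and "a m" and top: "\<forall>i\<in>{m+1..n}. \<not> a i" and "1 \<le> j"
  shows "spacings n a j = spacings (m - 1) (restrict_to {1..m-1} a) j + (if j = n + 1 - m then 1 else 0)"
proof -
  define e where "e = eta_ext n a"
  define e' where "e' = eta_ext (m - 1) (restrict_to {1..m-1} a)"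
  have agree: "e k = e' k" if "1 \<le> k" "k \<le> m" for k
    using that m \<open>a m\<close> by (auto simp: e_def e'_def eta_ext_def restrict_to_def)
  have last: "ends_spacing e j i \<longleftrightarrow> e i \<and> j = i - m" if "m < i" "i \<le> n + 1" for i
    by (rule ends_spacing_after_last_one)
       (use that m \<open>a m\<close> top \<open>1 \<le> j\<close> in \<open>auto simp: e_def eta_ext_def\<close>)
  have "{i \<in> {j+1..n+1}. ends_spacing e j i}
      = {i \<in> {j+1..m}. ends_spacing e' j i} \<union> (if j = n + 1 - m then {n+1} else {})"
  proof (rule set_eqI)
    fix i
    consider "i \<le> m" | "m < i" "i \<le> n" | "i = n + 1" | "n + 1 < i" by linarith
    thus "i \<in> {i \<in> {j+1..n+1}. ends_spacing e j i}
        \<longleftrightarrow> i \<in> {i \<in> {j+1..m}. ends_spacing e' j i} \<union> (if j = n + 1 - m then {n+1} else {})"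
    proof cases
      case 1
      have "j + 1 \<le> i \<Longrightarrow> ends_spacing e j i \<longleftrightarrow> ends_spacing e' j i"
        by (rule ends_spacing_cong) (use agree 1 in auto)
      thus ?thesis using 1 m by auto
    next
      case 2
      thus ?thesis using last[of i] top by (auto simp: e_def eta_ext_def)
    next
      case 3
      thus ?thesis using last[of i] m by (auto simp: e_def eta_ext_def)
    qed (use m in auto)
  qed
  hence "spacings n a j = card {i \<in> {j+1..m}. ends_spacing e' j i}
      + card (if j = n + 1 - m then {n+1} else {} :: nat set)"
    unfolding spacings_eq_card e_def[symmetric] using m by (simp add: card_Un_disjoint)
  thus ?thesis using m by (simp add: spacings_eq_card e'_def)
qed

lemma spacing_counts_remove_last_one:
  assumes m: "1 \<le> m" "m \<le> n" and "a m" and "\<forall>i\<in>{m+1..n}. \<not> a i"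
  shows "spacing_counts n a = (\<lambda>j. spacing_counts (m - 1) (restrict_to {1..m-1} a) j
           + (if j = n + 1 - m then 1 else 0))"
proof
  fix j
  have "spacings (m - 1) (restrict_to {1..m-1} a) j = 0" if "j \<ge> m"
    using that m by (simp add: spacings_def)
  thus "spacing_counts n a j = spacing_counts (m - 1) (restrict_to {1..m-1} a) j
      + (if j = n + 1 - m then 1 else 0)"
    using spacings_remove_last_one[OF assms, of j] m by (auto simp: spacing_counts_def)
qed

lemma Delta_iff_no_1_spacing:
  assumes "1 \<le> n" "a 1"
  shows "a \<in> Delta n \<longleftrightarrow> spacings n a 1 = 0"
proof -
  have "spacings n a 1 = 0 \<longleftrightarrow> (\<forall>i\<in>{2..n+1}. \<not> (eta_ext n a i \<and> eta_ext n a (i - 1)))"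
    by (auto simp: spacings_def)
  also have "\<dots> \<longleftrightarrow> \<not> a n \<and> (\<forall>i\<in>{2..n}. \<not> (a i \<and> a (i - 1)))"
  proof -
    have "{2..n+1} = insert (n+1) {2..n}" using assms by auto
    moreover have "\<forall>i\<in>{2..n}. eta_ext n a i = a i \<and> eta_ext n a (i - 1) = a (i - 1)"
      by (auto simp: eta_ext_def)
    ultimately show ?thesis by (auto simp: eta_ext_def)
  qed
  finally show ?thesis using assms by (auto simp: Delta_def)
qed

lemma add_indicator_eq_iff:
  fixes g c :: "nat \<Rightarrow> nat"
  shows "(\<lambda>k. g k + (if k = j then 1 else 0)) = c \<longleftrightarrow> 1 \<le> c j \<and> g = c(j := c j - 1)"
proof
  assume "(\<lambda>k. g k + (if k = j then 1 else 0)) = c"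
  hence pointwise: "g k + (if k = j then 1 else 0) = c k" for k by (simp add: fun_eq_iff)
  have "g = c(j := c j - 1)"
  proof
    fix k show "g k = (c(j := c j - 1)) k" using pointwise[of k] by (cases "k = j") auto
  qed
  thus "1 \<le> c j \<and> g = c(j := c j - 1)" using pointwise[of j] by simp
qed (auto simp: fun_eq_iff)

lemma weighted_sum_remove_part:
  fixes c :: "nat \<Rightarrow> nat"
  assumes "j \<in> {1..n}" "1 \<le> c j"
  shows "(\<Sum>i=1..n. i * (c(j := c j - 1)) i) + j = (\<Sum>i=1..n. i * c i)"
proof -
  have "(\<Sum>i=1..n. i * (c(j := c j - 1)) i) = j * (c j - 1) + (\<Sum>i\<in>{1..n}-{j}. i * c i)"
    using assms by (subst sum.remove[of _ j]) (auto intro!: sum.cong)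
  moreover have "(\<Sum>i=1..n. i * c i) = j * c j + (\<Sum>i\<in>{1..n}-{j}. i * c i)"
    using assms by (subst sum.remove[of _ j]) auto
  moreover have "j * (c j - 1) + j = j * c j" using assms(2) by (simp add: diff_mult_distrib2)
  ultimately show ?thesis by simp
qed

lemma esf_space_remove_part_support:
  fixes c :: "nat \<Rightarrow> nat"
  assumes c: "c \<in> esf_space n" and j: "j \<in> {1..n}" "1 \<le> c j" and k: "n - j < k"
  shows "(c(j := c j - 1)) k = 0"
proof -
  have sum_n: "(\<Sum>i=1..n. i * c i) = n" and outside: "\<forall>k. k \<notin> {1..n} \<longrightarrow> c k = 0"
    using c by (auto simp: esf_space_def)
  consider "k \<notin> {1..n}" | "k = j" | "k \<in> {1..n}" "k \<noteq> j" by blast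
  thus ?thesis
  proof cases
    case 1
    thus ?thesis using outside j by auto
  next
    case 2
    have "j * c j \<le> n" using member_le_sum[OF j(1), of "\<lambda>i. i * c i"] sum_n by simp
    have "c j < 2"
    proof (rule ccontr)
      assume "\<not> c j < 2"
      hence "j * 2 \<le> j * c j" by (intro mult_le_mono2) simp
      thus False using \<open>j * c j \<le> n\<close> k 2 by linarith
    qed
    thus ?thesis using 2 j by simp
  next
    case 3
    have "(\<Sum>i\<in>{j, k}. i * c i) \<le> (\<Sum>i=1..n. i * c i)"
      using j 3 by (intro sum_mono2) auto
    hence "k * c k + j * c j \<le> n" using 3 sum_n by simp
    moreover have "j \<le> j * c j" using j by simp
    ultimately have "k * c k < k" using k by linarith
    thus ?thesis using 3 by simp
  qed
qed

lemma esf_space_remove_part: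
  fixes c :: "nat \<Rightarrow> nat"
  assumes j: "j \<in> {1..n}" "1 \<le> c j"
  shows "c \<in> esf_space n \<longleftrightarrow> c(j := c j - 1) \<in> esf_space (n - j)"
proof -
  let ?c' = "c(j := c j - 1)"
  have removed: "(\<Sum>i=1..n. i * ?c' i) + j = (\<Sum>i=1..n. i * c i)"
    using weighted_sum_remove_part[of j n c] j by simp
  have shorter: "(\<Sum>i=1..n-j. i * ?c' i) = (\<Sum>i=1..n. i * ?c' i)"
    if "\<forall>k. k \<notin> {1..n-j} \<longrightarrow> ?c' k = 0"
    by (rule sum.mono_neutral_left) (use that in auto)
  show ?thesis
  proof
    assume c: "c \<in> esf_space n"
    have support: "\<forall>k. k \<notin> {1..n-j} \<longrightarrow> ?c' k = 0"
    proof (intro allI impI)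
      fix k assume "k \<notin> {1..n-j}"
      thus "?c' k = 0"
        using esf_space_remove_part_support[OF c j, of k] c j by (cases "k = 0") (auto simp: esf_space_def)
    qed
    moreover have "(\<Sum>i=1..n-j. i * ?c' i) = n - j"
      using shorter[OF support] removed c by (simp add: esf_space_def)
    ultimately show "?c' \<in> esf_space (n - j)" by (simp add: esf_space_def)
  next
    assume c': "?c' \<in> esf_space (n - j)"
    hence support: "\<forall>k. k \<notin> {1..n-j} \<longrightarrow> ?c' k = 0"
      and sum_c': "(\<Sum>i=1..n-j. i * ?c' i) = n - j"
      by (auto simp: esf_space_def)
    have "\<forall>k. k \<notin> {1..n} \<longrightarrow> c k = 0"
    proof (intro allI impI)
      fix k assume "k \<notin> {1..n}"
      hence "k \<noteq> j" "k \<notin> {1..n-j}" using j by auto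
      thus "c k = 0" using support by (metis fun_upd_other)
    qed
    moreover have "(\<Sum>i=1..n. i * c i) = n"
      using shorter[OF support] removed sum_c' j by simp
    ultimately show "c \<in> esf_space n" by (simp add: esf_space_def)
  qed
qed

lemma finite_esf_space: "finite (esf_space n)"
proof -
  have "esf_space n \<subseteq> {f. \<forall>x. (x \<in> {1..n} \<longrightarrow> f x \<in> {0..n}) \<and> (x \<notin> {1..n} \<longrightarrow> f x = 0)}"
  proof safe
    fix c x assume c: "c \<in> esf_space n" and x: "x \<in> {1..n}"
    have "x * c x \<le> n" using member_le_sum[OF x, of "\<lambda>i. i * c i"] c by (simp add: esf_space_def)
    moreover have "c x \<le> x * c x" using x by simp
    ultimately have "c x \<le> n" by linarith
    thus "c x \<in> {0..n}" by simp
  qed (auto simp: esf_space_def)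
  thus ?thesis by (rule finite_subset) (intro finite_set_of_finite_funs; simp)
qed

definition esf_pmf :: "real \<Rightarrow> nat \<Rightarrow> (nat \<Rightarrow> nat) \<Rightarrow> real" where
  "esf_pmf \<theta> n c = (if c \<in> esf_space n then esf_weight \<theta> n c else 0)"

definition esf_factor :: "real \<Rightarrow> nat \<Rightarrow> nat \<Rightarrow> real" where
  "esf_factor \<theta> k x = (\<theta> / real k) ^ x / fact x"

lemma esf_weight_eq_prod: "esf_weight \<theta> n c = fact n / pochhammer \<theta> n * (\<Prod>k=1..n. esf_factor \<theta> k (c k))"
  by (simp add: esf_weight_def esf_factor_def)

lemma esf_factor_pred:
  assumes "1 \<le> x" "1 \<le> k"
  shows "esf_factor \<theta> k (x - 1) * \<theta> = esf_factor \<theta> k x * (real k * real x)"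
proof -
  obtain y where y: "x = Suc y" using assms by (cases x) auto
  have "fact (Suc y) = real (Suc y) * (fact y :: real)" by (simp only: fact_Suc of_nat_mult)
  moreover have "real k \<noteq> 0" using assms by simp
  ultimately show ?thesis unfolding y esf_factor_def by (simp add: field_simps del: of_nat_Suc)
qed

lemma prod_esf_factor_remove_part:
  assumes j: "j \<in> {1..n}" "1 \<le> c j" and c': "c(j := c j - 1) \<in> esf_space (n - j)"
  shows "(\<Prod>k=1..n-j. esf_factor \<theta> k ((c(j := c j - 1)) k)) * \<theta>
       = (\<Prod>k=1..n. esf_factor \<theta> k (c k)) * (real j * real (c j))"
proof -
  let ?c' = "c(j := c j - 1)" and ?rest = "\<Prod>k\<in>{1..n}-{j}. esf_factor \<theta> k (c k)"
  have "\<forall>k. k \<notin> {1..n-j} \<longrightarrow> ?c' k = 0" using c' by (simp add: esf_space_def)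
  hence "(\<Prod>k=1..n-j. esf_factor \<theta> k (?c' k)) = (\<Prod>k=1..n. esf_factor \<theta> k (?c' k))"
    by (intro prod.mono_neutral_left) (auto simp: esf_factor_def)
  also have "\<dots> = esf_factor \<theta> j (c j - 1) * ?rest"
    using j by (subst prod.remove[of _ j]) (auto intro!: prod.cong)
  finally have "(\<Prod>k=1..n-j. esf_factor \<theta> k (?c' k)) = esf_factor \<theta> j (c j - 1) * ?rest" .
  moreover have "(\<Prod>k=1..n. esf_factor \<theta> k (c k)) = esf_factor \<theta> j (c j) * ?rest"
    using j by (subst prod.remove[of _ j]) auto
  ultimately show ?thesis using esf_factor_pred[of "c j" j \<theta>] j by (simp add: algebra_simps)
qed

context
  fixes \<theta> :: real
  assumes \<theta>_pos: "\<theta> > 0"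
begin

lemma prod_pmf_xi_bern_single_one:
  assumes m: "1 \<le> m" "m \<le> n"
  shows "(\<Prod>i\<in>{m..n}. pmf (xi_bern \<theta> i) (i = m)) * pochhammer \<theta> n * fact (m - 1)
       = \<theta> * fact (n - 1) * pochhammer \<theta> (m - 1)"
  using m(2)
proof (induction n rule: dec_induct)
  case base
  have "pochhammer \<theta> m = pochhammer \<theta> (m - 1) * (\<theta> + real m - 1)"
    using m(1) pochhammer_Suc[of \<theta> "m - 1"] by (simp add: of_nat_diff)
  moreover have "\<theta> + real m - 1 \<noteq> 0" using \<theta>_pos m(1) by simp
  ultimately show ?case using pmf_xi_bern_True[OF \<theta>_pos m(1)] by simp
next
  case (step k)
  have k: "1 \<le> k" using step m by simp
  have "{m..Suc k} = insert (Suc k) {m..k}" using step by auto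
  hence "(\<Prod>i\<in>{m..Suc k}. pmf (xi_bern \<theta> i) (i = m))
      = pmf (xi_bern \<theta> (Suc k)) False * (\<Prod>i\<in>{m..k}. pmf (xi_bern \<theta> i) (i = m))"
    using step by simp
  also have "pmf (xi_bern \<theta> (Suc k)) False = real k / (\<theta> + real k)"
    using pmf_xi_bern_False[OF \<theta>_pos, of "Suc k"] by simp
  finally have prod_Suc: "(\<Prod>i\<in>{m..Suc k}. pmf (xi_bern \<theta> i) (i = m))
      = real k / (\<theta> + real k) * (\<Prod>i\<in>{m..k}. pmf (xi_bern \<theta> i) (i = m))" .
  moreover have "fact (Suc k - 1) = real k * (fact (k - 1) :: real)"
    using k by (metis Suc_diff_1 diff_Suc_1 fact_Suc less_le_trans zero_less_one of_nat_mult of_nat_fact le_less)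
  moreover have "\<theta> + real k > 0" using \<theta>_pos by simp
  ultimately show ?case using step.IH unfolding prod_Suc pochhammer_Suc by (simp add: field_simps)
qed

lemma esf_weight_remove_part:
  assumes j: "j \<in> {1..n}" "1 \<le> c j" and c: "c \<in> esf_space n"
  shows "esf_weight \<theta> (n - j) (c(j := c j - 1)) * (\<Prod>i\<in>{n+1-j..n}. pmf (xi_bern \<theta> i) (i = n + 1 - j))
       = esf_weight \<theta> n c * (real j * real (c j)) / real n"
proof -
  let ?c' = "c(j := c j - 1)"
  define G where "G = (\<Prod>i\<in>{n+1-j..n}. pmf (xi_bern \<theta> i) (i = n + 1 - j))"
  define F' where "F' = (\<Prod>k=1..n-j. esf_factor \<theta> k (?c' k))"
  define F where "F = (\<Prod>k=1..n. esf_factor \<theta> k (c k))"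
  have G: "G * pochhammer \<theta> n * fact (n - j) = \<theta> * fact (n - 1) * pochhammer \<theta> (n - j)"
  proof -
    have "Suc (n - j) \<le> n" using j by auto
    thus ?thesis using prod_pmf_xi_bern_single_one[of "n + 1 - j" n] j unfolding G_def by (simp add: Suc_diff_le)
  qed
  have F: "F' * \<theta> = F * (real j * real (c j))"
    unfolding F'_def F_def
    using prod_esf_factor_remove_part[of j n c \<theta>] esf_space_remove_part[of j n c] j c by simp
  have fn: "fact n = real n * (fact (n - 1) :: real)" using j
    by (metis Suc_diff_1 atLeastAtMost_iff fact_Suc le_less_trans less_numeral_extra(1) of_nat_fact of_nat_mult le_less)
  have pos: "pochhammer \<theta> n > 0" "pochhammer \<theta> (n - j) > 0" "real n > 0" "(fact (n - j) :: real) > 0"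
    using \<theta>_pos j by (auto simp: pochhammer_pos)
  have "esf_weight \<theta> (n - j) ?c' * G = F' * \<theta> * fact (n - 1) / pochhammer \<theta> n"
    unfolding esf_weight_eq_prod F'_def[symmetric] using G pos by (simp add: field_simps)
  also have "\<dots> = esf_weight \<theta> n c * (real j * real (c j)) / real n"
    unfolding F esf_weight_eq_prod F_def[symmetric] fn using pos by (simp add: field_simps)
  finally show ?thesis unfolding G_def .
qed

text \<open>The recursion of the Ewens sampling formula obtained by removing the part of size \<open>j\<close>
  (size-biased, with probability \<open>j c\<^sub>j / n\<close>); the product is the probability that \<open>\<xi>\<^bsub>n+1-j\<^esub>\<close>
  is the last 1 among \<open>\<xi>\<^sub>1, \<dots>, \<xi>\<^sub>n\<close>.\<close>

lemma esf_pmf_rec: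
  assumes n: "1 \<le> n"
  shows "(\<Sum>j=1..n. (if 1 \<le> c j then esf_pmf \<theta> (n - j) (c(j := c j - 1)) else 0)
            * (\<Prod>i\<in>{n+1-j..n}. pmf (xi_bern \<theta> i) (i = n + 1 - j)))
       = esf_pmf \<theta> n c"
proof (cases "c \<in> esf_space n")
  case True
  have "(\<Sum>j=1..n. (if 1 \<le> c j then esf_pmf \<theta> (n - j) (c(j := c j - 1)) else 0)
            * (\<Prod>i\<in>{n+1-j..n}. pmf (xi_bern \<theta> i) (i = n + 1 - j)))
      = (\<Sum>j=1..n. esf_weight \<theta> n c / real n * real (j * c j))"
  proof (intro sum.cong refl)
    fix j assume j: "j \<in> {1..n}"
    show "(if 1 \<le> c j then esf_pmf \<theta> (n - j) (c(j := c j - 1)) else 0)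
          * (\<Prod>i\<in>{n+1-j..n}. pmf (xi_bern \<theta> i) (i = n + 1 - j))
        = esf_weight \<theta> n c / real n * real (j * c j)"
      using esf_weight_remove_part[OF j _ True] esf_space_remove_part[OF j] True
      by (cases "1 \<le> c j") (simp_all add: esf_pmf_def)
  qed
  also have "\<dots> = esf_weight \<theta> n c / real n * real (\<Sum>j=1..n. j * c j)"
    by (simp add: sum_distrib_left)
  also have "\<dots> = esf_pmf \<theta> n c"
    using True n by (simp add: esf_space_def esf_pmf_def)
  finally show ?thesis .
next
  case False
  thus ?thesis using esf_space_remove_part by (auto simp: esf_pmf_def intro!: sum.neutral)
qed

lemma prob_xi_on_single_one:
  assumes m: "1 \<le> m" "m \<le> n"
  shows "measure_pmf.prob (xi_on \<theta> {m..n}) {u. u m \<and> (\<forall>i\<in>{m+1..n}. \<not> u i)}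
       = (\<Prod>i\<in>{m..n}. pmf (xi_bern \<theta> i) (i = m))"
proof -
  have "{u. u m \<and> (\<forall>i\<in>{m+1..n}. \<not> u i)} = {f. \<forall>i\<in>{m..n}. f i = (i = m)}"
    using m by (auto simp: Ball_def) (metis Suc_eq_plus1 Suc_leI le_antisym le_neq_implies_less)
  thus ?thesis using prob_xi_on_pattern[OF \<theta>_pos, of "{m..n}" "\<lambda>i. i = m"] by simp
qed

lemma prob_xi_on_by_last_one:
  assumes n: "1 \<le> n"
  shows "measure_pmf.prob (xi_on \<theta> {1..n}) X
       = (\<Sum>m\<in>{1..n}. measure_pmf.prob (xi_on \<theta> {1..n}) (X \<inter> {a. a m \<and> (\<forall>i\<in>{m+1..n}. \<not> a i)}))"
proof -
  define E where "E m = X \<inter> {a. a m \<and> (\<forall>i\<in>{m+1..n}. \<not> a i)}" for m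
  have "measure_pmf.prob (xi_on \<theta> {1..n}) X = measure_pmf.prob (xi_on \<theta> {1..n}) (\<Union>m\<in>{1..n}. E m)"
  proof (rule measure_pmf_prob_cong_support)
    fix f assume f: "f \<in> set_pmf (xi_on \<theta> {1..n})"
    define M where "M = Max {i\<in>{1..n}. f i}"
    have fin: "finite {i\<in>{1..n}. f i}" and ne: "{i\<in>{1..n}. f i} \<noteq> {}"
      using xi_on_1[OF \<theta>_pos _ f] n by auto
    have "M \<in> {1..n}" "f M" using Max_in[OF fin ne] by (auto simp: M_def)
    moreover have "\<forall>i\<in>{M+1..n}. \<not> f i"
    proof (intro ballI notI)
      fix i assume "i \<in> {M+1..n}" "f i"
      moreover from this have "i \<le> M" using Max_ge[OF fin, of i] by (auto simp: M_def)
      ultimately show False by auto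
    qed
    ultimately show "f \<in> X \<longleftrightarrow> f \<in> (\<Union>m\<in>{1..n}. E m)" by (auto simp: E_def)
  qed
  also have "\<dots> = (\<Sum>m\<in>{1..n}. measure_pmf.prob (xi_on \<theta> {1..n}) (E m))"
  proof (rule measure_pmf.finite_measure_finite_Union)
    show "disjoint_family_on E {1..n}"
      unfolding disjoint_family_on_def E_def
      by (auto simp: set_eq_iff) (meson Suc_le_eq atLeastAtMost_iff le_refl nat_neq_iff)
  qed auto
  finally show ?thesis by (simp add: E_def)
qed

lemma prob_spacing_counts_last_one:
  assumes m: "1 \<le> m" "m \<le> n"
  shows "measure_pmf.prob (xi_on \<theta> {1..n}) ({a. spacing_counts n a = c} \<inter> {a. a m \<and> (\<forall>i\<in>{m+1..n}. \<not> a i)})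
    = measure_pmf.prob (xi_on \<theta> {1..m-1})
        {l. 1 \<le> c (n + 1 - m) \<and> spacing_counts (m - 1) l = c(n + 1 - m := c (n + 1 - m) - 1)}
      * measure_pmf.prob (xi_on \<theta> {m..n}) {u. u m \<and> (\<forall>i\<in>{m+1..n}. \<not> u i)}"
proof -
  have "measure_pmf.prob (xi_on \<theta> ({1..m-1} \<union> {m..n}))
      ({a. spacing_counts n a = c} \<inter> {a. a m \<and> (\<forall>i\<in>{m+1..n}. \<not> a i)})
    = measure_pmf.prob (xi_on \<theta> {1..m-1})
        {l. 1 \<le> c (n + 1 - m) \<and> spacing_counts (m - 1) l = c(n + 1 - m := c (n + 1 - m) - 1)}
      * measure_pmf.prob (xi_on \<theta> {m..n}) {u. u m \<and> (\<forall>i\<in>{m+1..n}. \<not> u i)}"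
  proof (rule prob_xi_on_Un[OF \<theta>_pos])
    fix f
    have top: "restrict_to {m..n} f m \<and> (\<forall>i\<in>{m+1..n}. \<not> restrict_to {m..n} f i)
        \<longleftrightarrow> f m \<and> (\<forall>i\<in>{m+1..n}. \<not> f i)"
      using m by (auto simp: restrict_to_def)
    show "f \<in> {a. spacing_counts n a = c} \<inter> {a. a m \<and> (\<forall>i\<in>{m+1..n}. \<not> a i)} \<longleftrightarrow>
      (1 \<le> c (n + 1 - m) \<and> spacing_counts (m - 1) (restrict_to {1..m-1} f) = c(n + 1 - m := c (n + 1 - m) - 1)) \<and>
      (restrict_to {m..n} f m \<and> (\<forall>i\<in>{m+1..n}. \<not> restrict_to {m..n} f i))"
    proof (cases "f m \<and> (\<forall>i\<in>{m+1..n}. \<not> f i)")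
      case True
      hence "spacing_counts n f = c
          \<longleftrightarrow> (\<lambda>j. spacing_counts (m - 1) (restrict_to {1..m-1} f) j + (if j = n + 1 - m then 1 else 0)) = c"
        using spacing_counts_remove_last_one[OF m, of f] by simp
      thus ?thesis using True top by (simp add: add_indicator_eq_iff)
    qed (use top in auto)
  qed auto
  moreover have "{1..m-1} \<union> {m..n} = {1..n}" using m by auto
  ultimately show ?thesis by simp
qed

text \<open>Conditioning on the position \<open>m\<close> of the last 1 splits off one spacing, of length
  \<open>n + 1 - m\<close>, which turns the induction step into the recursion \<open>esf_pmf_rec\<close>.\<close>

lemma prob_spacing_counts:
  "measure_pmf.prob (xi_on \<theta> {1..n}) {a. spacing_counts n a = c} = esf_pmf \<theta> n c"
proof (induction n arbitrary: c rule: less_induct)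
  case (less n)
  show ?case
  proof (cases "n = 0")
    case True
    have "esf_space 0 = {\<lambda>_. 0}" by (auto simp: esf_space_def)
    moreover have "spacing_counts 0 a = (\<lambda>_. 0)" for a by (simp add: spacing_counts_def fun_eq_iff)
    moreover have "xi_on \<theta> {1..0} = return_pmf (\<lambda>_. False)" by (simp add: xi_on_def)
    ultimately show ?thesis using True
      by (cases "c = (\<lambda>_. 0)") (auto simp: indicator_def esf_pmf_def esf_weight_def)
  next
    case False
    hence n: "1 \<le> n" by simp
    define G where "G m = (\<Prod>i\<in>{m..n}. pmf (xi_bern \<theta> i) (i = m))" for m
    define T where "T j = (if 1 \<le> c j then esf_pmf \<theta> (n - j) (c(j := c j - 1)) else 0)" for j
    have "measure_pmf.prob (xi_on \<theta> {1..n}) {a. spacing_counts n a = c}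
        = (\<Sum>m\<in>{1..n}. measure_pmf.prob (xi_on \<theta> {1..n})
             ({a. spacing_counts n a = c} \<inter> {a. a m \<and> (\<forall>i\<in>{m+1..n}. \<not> a i)}))"
      by (rule prob_xi_on_by_last_one[OF n])
    also have "\<dots> = (\<Sum>m\<in>{1..n}. T (n + 1 - m) * G m)"
    proof (intro sum.cong refl)
      fix m assume m: "m \<in> {1..n}"
      have IH: "measure_pmf.prob (xi_on \<theta> {1..m-1}) {l. b \<and> spacing_counts (m - 1) l = c'}
          = (if b then esf_pmf \<theta> (m - 1) c' else 0)" for b c'
        using less.IH[of "m - 1" c'] m by (cases b) auto
      have "measure_pmf.prob (xi_on \<theta> {1..m-1})
          {l. 1 \<le> c (n + 1 - m) \<and> spacing_counts (m - 1) l = c(n + 1 - m := c (n + 1 - m) - 1)}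
          = T (n + 1 - m)"
        unfolding IH using m by (simp add: T_def)
      thus "measure_pmf.prob (xi_on \<theta> {1..n})
          ({a. spacing_counts n a = c} \<inter> {a. a m \<and> (\<forall>i\<in>{m+1..n}. \<not> a i)}) = T (n + 1 - m) * G m"
        using prob_spacing_counts_last_one[of m n c] prob_xi_on_single_one[of m n] m
        by (simp add: G_def)
    qed
    also have "\<dots> = (\<Sum>j=1..n. T j * G (n + 1 - j))"
      by (rule sum.reindex_bij_witness[of _ "\<lambda>j. n + 1 - j" "\<lambda>m. n + 1 - m"]) auto
    also have "\<dots> = esf_pmf \<theta> n c"
      using esf_pmf_rec[OF n, of c] by (simp add: T_def G_def)
    finally show ?thesis .
  qed
qed

lemma prob_spacing_counts_in:
  "measure_pmf.prob (xi_on \<theta> {1..n}) {a. spacing_counts n a \<in> B} = esf_prob \<theta> n B"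
proof -
  have in_esf_space: "spacing_counts n a \<in> esf_space n" if "a \<in> set_pmf (xi_on \<theta> {1..n})" for a
  proof (rule ccontr)
    assume "spacing_counts n a \<notin> esf_space n"
    hence "measure_pmf.prob (xi_on \<theta> {1..n}) {b. spacing_counts n b = spacing_counts n a} = 0"
      using prob_spacing_counts by (simp add: esf_pmf_def)
    moreover have "measure_pmf.prob (xi_on \<theta> {1..n}) {b. spacing_counts n b = spacing_counts n a} > 0"
      by (rule measure_pmf_posI[OF that]) simp
    ultimately show False by simp
  qed
  have "measure_pmf.prob (xi_on \<theta> {1..n}) {a. spacing_counts n a \<in> B}
      = measure_pmf.prob (xi_on \<theta> {1..n}) (\<Union>C\<in>esf_space n \<inter> B. {a. spacing_counts n a = C})"
    by (rule measure_pmf_prob_cong_support) (use in_esf_space in auto)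
  also have "\<dots> = (\<Sum>C\<in>esf_space n \<inter> B. measure_pmf.prob (xi_on \<theta> {1..n}) {a. spacing_counts n a = C})"
    by (rule measure_pmf.finite_measure_finite_Union)
       (auto simp: disjoint_family_on_def intro: finite_subset[OF _ finite_esf_space])
  also have "\<dots> = (\<Sum>C\<in>esf_space n \<inter> B. esf_weight \<theta> n C)"
    using prob_spacing_counts[of n] by (intro sum.cong refl) (simp add: esf_pmf_def)
  also have "\<dots> = esf_prob \<theta> n B" by (simp add: esf_prob_def)
  finally show ?thesis .
qed

lemma prob_eta_spacings:
  assumes n: "2 \<le> n"
  shows "measure_pmf.prob (eta_pmf \<theta> n) {a. \<forall>j\<in>{2..n}. spacings n a j = c j}
       = esf_prob \<theta> n {C. C 1 = 0 \<and> (\<forall>j\<in>{2..n}. C j = c j)} / esf_prob \<theta> n {C. C 1 = 0}"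
proof -
  have counts: "spacing_counts n a 1 = spacings n a 1" "\<forall>j\<in>{2..n}. spacing_counts n a j = spacings n a j"
    for a using n by (simp_all add: spacing_counts_def)
  have Delta: "a \<in> Delta n \<longleftrightarrow> spacing_counts n a 1 = 0" if "a \<in> set_pmf (xi_on \<theta> {1..n})" for a
    using Delta_iff_no_1_spacing[of n a] xi_on_1[OF \<theta>_pos _ that] n counts by simp
  have "measure_pmf.prob (xi_on \<theta> {1..n}) (Delta n \<inter> {a. \<forall>j\<in>{2..n}. spacings n a j = c j})
      = measure_pmf.prob (xi_on \<theta> {1..n}) {a. spacing_counts n a \<in> {C. C 1 = 0 \<and> (\<forall>j\<in>{2..n}. C j = c j)}}"
    by (rule measure_pmf_prob_cong_support) (use Delta counts in auto)
  moreover have "measure_pmf.prob (xi_on \<theta> {1..n}) (Delta n)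
      = measure_pmf.prob (xi_on \<theta> {1..n}) {a. spacing_counts n a \<in> {C. C 1 = 0}}"
    by (rule measure_pmf_prob_cong_support) (use Delta in auto)
  ultimately show ?thesis
    using prob_eta_pmf[OF \<theta>_pos n] by (simp only: prob_spacing_counts_in)
qed

end

theorem theorem1:
  fixes \<theta> :: real and n :: nat
  assumes "\<theta> > 0" and "n \<ge> 3"
  defines "P \<equiv> measure_pmf.prob (eta_pmf \<theta> n)"
  shows "P {a. \<not> a n} = 1
    \<and> (\<forall>r\<in>{3..n-1}. \<forall>h :: nat \<Rightarrow> bool. \<forall>b :: bool.
          P {a. \<forall>k\<in>{r+1..n+1}. eta_ext n a k = h k} > 0 \<longrightarrow>
          P {a. a r = b \<and> (\<forall>k\<in>{r+1..n+1}. eta_ext n a k = h k)}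
            / P {a. \<forall>k\<in>{r+1..n+1}. eta_ext n a k = h k}
          = trans_prob \<theta> r (h (r + 1)) b)
    \<and> P {a. \<not> a 2} = 1
    \<and> P {a. a 1} = 1
    \<and> (\<forall>c :: nat \<Rightarrow> nat.
          P {a. \<forall>j\<in>{2..n}. spacings n a j = c j}
          = esf_prob \<theta> n {C. C 1 = 0 \<and> (\<forall>j\<in>{2..n}. C j = c j)} / esf_prob \<theta> n {C. C 1 = 0})"
proof -
  have n: "2 \<le> n" using assms(2) by simp
  have "Delta n \<subseteq> {a. \<not> a n}" "Delta n \<subseteq> {a. a 1}" by (auto simp: Delta_def)
  moreover have "Delta n \<subseteq> {a. \<not> a 2}"
    using n by (auto simp: Delta_def dest!: bspec[of _ _ 2])
  ultimately have "P {a. \<not> a n} = 1" "P {a. \<not> a 2} = 1" "P {a. a 1} = 1"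
    unfolding P_def using prob_eta_pmf_eq_1[OF assms(1) n] by blast+
  moreover have "\<forall>r\<in>{3..n-1}. \<forall>h b. P {a. \<forall>k\<in>{r+1..n+1}. eta_ext n a k = h k} > 0 \<longrightarrow>
          P {a. a r = b \<and> (\<forall>k\<in>{r+1..n+1}. eta_ext n a k = h k)}
            / P {a. \<forall>k\<in>{r+1..n+1}. eta_ext n a k = h k}
          = trans_prob \<theta> r (h (r + 1)) b"
    unfolding P_def using eta_transition[OF assms(1)] by auto
  moreover have "\<forall>c. P {a. \<forall>j\<in>{2..n}. spacings n a j = c j}
          = esf_prob \<theta> n {C. C 1 = 0 \<and> (\<forall>j\<in>{2..n}. C j = c j)} / esf_prob \<theta> n {C. C 1 = 0}"
    unfolding P_def using prob_eta_spacings[OF assms(1) n] by blast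
  ultimately show ?thesis by blast
qed

end
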